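(* Let $T$ be a nonempty rooted tree (labelled, unlabelled planar, or unlabelled non-planar) and $X^T$ its associated simplicial set. Then the Segal map $(d_0,d_2)\colon X^T_2\to X^T_1\times X^T_1$ is not surjective; in particular $X^T$ is not a 1-Segal set (i.e. not isomorphic to the nerve of a category).
   Context: A rooted tree $T$ is a finite tree with a distinguished vertex $v_0$ (the root); its vertex set is partially ordered by $v\le w$ iff $v$ lies on the unique path from $v_0$ to $w$. A planar rooted tree additionally carries, for each vertex, a total order on the edges going up from it. A rooted forest is a finite disjoint union of rooted trees. For a subset $S$ of the vertices of a rooted forest $F$, the subforest spanned by $S$ has vertex set $S$, the edges of $F$ with both endpoints in $S$, and the induced partial order (planar structures inherited). A subset $L\subseteq V(F)$ defines a lower subforest if $w\in L$ and $v\le w$ imply $v\in L$. For $n\ge 1$, a layering of $n-1$ cuts of $F$ is a chain $V(F)=L_0\supseteq L_1\supseteq\cdots\supseteq L_n=\varnothing$ of subsets each defining a lower subforest of $F$. An admissible subforest of $T$ is the subforest spanned by $L_i\setminus L_j$ ($i\le j$) for some layering of $T$. The simplicial set $X^T$ (labelled version): $X^T_0$ is a point; for $n\ge1$, $X^T_n$ is the set of pairs $(H; L_0\supseteq\cdots\supseteq L_n)$ with $H$ an admissible subforest of $T$ and $V(H)=L_0\supseteq\cdots\supseteq L_n=\varnothing$ a layering of $H$ (so $X^T_1$ is the set of admissible subforests). For $n\ge2$: $d_0(H;L_\bullet)=(H|_{L_1};L_1\supseteq\cdots\supseteq L_n)$; $d_n(H;L_\bullet)=(H|_{L_0\setminus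 L_{n-1}};L_0\setminus L_{n-1}\supseteq\cdots\supseteq L_{n-1}\setminus L_{n-1})$; for $0<i<n$, $d_i$ deletes $L_i$; degeneracies $s_i$ repeat $L_i$. In the unlabelled (planar or non-planar) version, $X^T_n$ consists of isomorphism classes of such pairs under isomorphisms of rooted forests (preserving planar structure in the planar case) carrying each $L_i$ onto $L'_i$. In particular for $(H\supseteq L\supseteq\varnothing)\in X^T_2$, $d_0$ gives the lower part $H|_L$ and $d_2$ gives the upper part $H|_{V(H)\setminus L}$. *)

theory Defs
  imports Main
begin

text \<open>A rooted tree is encoded by its finite vertex set V together with the
partial order le (v le w iff v lies on the path from the root to w).
A finite poset with a least element in which every principal down-set is a
chain is exactly (the vertex poset of) a rooted tree; the edges are the
covering relations.\<close>

definition rooted_tree :: "'a set \<Rightarrow> ('a \<Rightarrow> 'a \<Rightarrow> bool) \<Rightarrow> bool" where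
  "rooted_tree V le \<longleftrightarrow>
     finite V \<and>
     (\<forall>x\<in>V. le x x) \<and>
     (\<forall>x\<in>V. \<forall>y\<in>V. le x y \<and> le y x \<longrightarrow> x = y) \<and>
     (\<forall>x\<in>V. \<forall>y\<in>V. \<forall>z\<in>V. le x y \<and> le y z \<longrightarrow> le x z) \<and>
     (\<exists>r\<in>V. \<forall>v\<in>V. le r v) \<and>
     (\<forall>w\<in>V. \<forall>u\<in>V. \<forall>v\<in>V. le u w \<and> le v w \<longrightarrow> le u v \<or> le v u)"

definition is_child :: "'a set \<Rightarrow> ('a \<Rightarrow> 'a \<Rightarrow> bool) \<Rightarrow> 'a \<Rightarrow> 'a \<Rightarrow> bool" where
  "is_child V le v w \<longleftrightarrow> v \<in> V \<and> w \<in> V \<and> v \<noteq> w \<and> le v w \<and>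
     \<not> (\<exists>u\<in>V. u \<noteq> v \<and> u \<noteq> w \<and> le v u \<and> le u w)"

text \<open>Planar structure: po v x y means that, among the edges going up from v,
the edge to x comes strictly before the edge to y.  For each vertex this is a
strict total order on the edges going up from it.\<close>
definition planar_structure ::
  "'a set \<Rightarrow> ('a \<Rightarrow> 'a \<Rightarrow> bool) \<Rightarrow> ('a \<Rightarrow> 'a \<Rightarrow> 'a \<Rightarrow> bool) \<Rightarrow> bool" where
  "planar_structure V le po \<longleftrightarrow>
     (\<forall>v x y. po v x y \<longrightarrow> is_child V le v x \<and> is_child V le v y) \<and>
     (\<forall>v x. \<not> po v x x) \<and>
     (\<forall>v x y z. po v x y \<and> po v y z \<longrightarrow> po v x z) \<and>
     (\<forall>v x y. is_child V le v x \<and> is_child V le v y \<and> x \<noteq> y \<longrightarrow> po v x y \<or> po v y x)"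

definition lower_set :: "'a set \<Rightarrow> ('a \<Rightarrow> 'a \<Rightarrow> bool) \<Rightarrow> 'a set \<Rightarrow> bool" where
  "lower_set S le L \<longleftrightarrow> L \<subseteq> S \<and> (\<forall>w\<in>L. \<forall>v\<in>S. le v w \<longrightarrow> v \<in> L)"

definition layering :: "'a set \<Rightarrow> ('a \<Rightarrow> 'a \<Rightarrow> bool) \<Rightarrow> (nat \<Rightarrow> 'a set) \<Rightarrow> nat \<Rightarrow> bool" where
  "layering S le Ls n \<longleftrightarrow> 1 \<le> n \<and> Ls 0 = S \<and> Ls n = {} \<and>
     (\<forall>i<n. Ls (Suc i) \<subseteq> Ls i) \<and> (\<forall>i\<le>n. lower_set S le (Ls i))"

text \<open>Admissible subforests of T (identified with their vertex sets; the
subforest is the one spanned, with induced order and planar structure).\<close>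
definition admissible :: "'a set \<Rightarrow> ('a \<Rightarrow> 'a \<Rightarrow> bool) \<Rightarrow> 'a set \<Rightarrow> bool" where
  "admissible V le H \<longleftrightarrow>
     (\<exists>Ls n i j. layering V le Ls n \<and> i \<le> j \<and> j \<le> n \<and> H = Ls i - Ls j)"

datatype version = Labelled | Unlabelled_Planar | Unlabelled_Nonplanar

definition subforest_iso ::
  "bool \<Rightarrow> ('a \<Rightarrow> 'a \<Rightarrow> bool) \<Rightarrow> ('a \<Rightarrow> 'a \<Rightarrow> 'a \<Rightarrow> bool) \<Rightarrow> 'a set \<Rightarrow> 'a set \<Rightarrow> ('a \<Rightarrow> 'a) \<Rightarrow> bool" where
  "subforest_iso planar le po A B f \<longleftrightarrow>
     bij_betw f A B \<and>
     (\<forall>x\<in>A. \<forall>y\<in>A. le x y \<longleftrightarrow> le (f x) (f y)) \<and>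
     (planar \<longrightarrow> (\<forall>v\<in>A. \<forall>x\<in>A. \<forall>y\<in>A. po v x y \<longleftrightarrow> po (f v) (f x) (f y)))"

definition same_X1 ::
  "version \<Rightarrow> ('a \<Rightarrow> 'a \<Rightarrow> bool) \<Rightarrow> ('a \<Rightarrow> 'a \<Rightarrow> 'a \<Rightarrow> bool) \<Rightarrow> 'a set \<Rightarrow> 'a set \<Rightarrow> bool" where
  "same_X1 ver le po A B \<longleftrightarrow>
     (case ver of
        Labelled \<Rightarrow> A = B
      | Unlabelled_Planar \<Rightarrow> (\<exists>f. subforest_iso True le po A B f)
      | Unlabelled_Nonplanar \<Rightarrow> (\<exists>f. subforest_iso False le po A B f))"

text \<open>Representatives of X^T_2: (H; H \<supseteq> L \<supseteq> {}), H admissible, a layering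
of H with one cut. Faces: d_0 = H|_L, d_2 = H|_(H - L).\<close>
definition X2_rep :: "'a set \<Rightarrow> ('a \<Rightarrow> 'a \<Rightarrow> bool) \<Rightarrow> ('a set \<times> 'a set) set" where
  "X2_rep V le = {(H, L). admissible V le H \<and>
      layering H le (\<lambda>i. if i = 0 then H else if i = 1 then L else {}) 2}"

definition face0_2 :: "'a set \<times> 'a set \<Rightarrow> 'a set" where
  "face0_2 p = snd p"

definition face2_2 :: "'a set \<times> 'a set \<Rightarrow> 'a set" where
  "face2_2 p = fst p - snd p"

definition segal_map_surjective ::
  "version \<Rightarrow> 'a set \<Rightarrow> ('a \<Rightarrow> 'a \<Rightarrow> bool) \<Rightarrow> ('a \<Rightarrow> 'a \<Rightarrow> 'a \<Rightarrow> bool) \<Rightarrow> bool" where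
  "segal_map_surjective ver V le po \<longleftrightarrow>
     (\<forall>A B. admissible V le A \<longrightarrow> admissible V le B \<longrightarrow>
        (\<exists>p\<in>X2_rep V le. same_X1 ver le po (face0_2 p) A \<and> same_X1 ver le po (face2_2 p) B))"

end

theory Submission
  imports Defs
begin

text \<open>Isomorphic subforests have the same number of vertices, and the two faces of a
2-simplex are disjoint subsets of T.  So the pair (T, T) in the image of the Segal map
would need a subforest of T with 2|T| vertices, which is impossible for T nonempty.\<close>

lemma admissible_subset:
  assumes "admissible V le H"
  shows "H \<subseteq> V"
proof -
  obtain Ls n i j where lay: "layering V le Ls n" and "i \<le> j" "j \<le> n" and H: "H = Ls i - Ls j"
    using assms unfolding admissible_def by blast
  with \<open>i \<le> j\<close> \<open>j \<le> n\<close> have "lower_set V le (Ls i)"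
    unfolding layering_def by simp
  then show ?thesis
    using H unfolding lower_set_def by blast
qed

lemma admissible_whole: "admissible V le V"
proof -
  let ?Ls = "\<lambda>i::nat. if i = 0 then V else {}"
  have "layering V le ?Ls 1"
    unfolding layering_def lower_set_def by (simp add: le_Suc_eq)
  moreover have "V = ?Ls 0 - ?Ls 1" by simp
  ultimately show ?thesis
    unfolding admissible_def by blast
qed

lemma same_X1_card_eq: "same_X1 ver le po A B \<Longrightarrow> card A = card B"
  unfolding same_X1_def subforest_iso_def
  by (cases ver) (auto dest: bij_betw_same_card)

lemma X2_rep_faces_subset:
  assumes "p \<in> X2_rep V le"
  shows "face0_2 p \<union> face2_2 p \<subseteq> V"
proof -
  obtain H L where p: "p = (H, L)" by (cases p)
  have "admissible V le H"
    and "layering H le (\<lambda>i::nat. if i = 0 then H else if i = 1 then L else {}) 2"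
    using assms p unfolding X2_rep_def by auto
  then have "H \<subseteq> V" and "lower_set H le L"
    using admissible_subset unfolding layering_def by (auto dest: spec[of _ 1])
  then show ?thesis
    using p unfolding lower_set_def face0_2_def face2_2_def by auto
qed

lemma X2_rep_faces_card_le:
  assumes "p \<in> X2_rep V le" and "finite V"
  shows "card (face0_2 p) + card (face2_2 p) \<le> card V"
proof -
  have "face0_2 p \<inter> face2_2 p = {}"
    unfolding face0_2_def face2_2_def by auto
  moreover have "finite (face0_2 p)" and "finite (face2_2 p)"
    using X2_rep_faces_subset[OF assms(1)] assms(2) finite_subset by blast+
  ultimately have "card (face0_2 p) + card (face2_2 p) = card (face0_2 p \<union> face2_2 p)"
    by (simp add: card_Un_disjoint)
  also have "\<dots> \<le> card V"
    using X2_rep_faces_subset[OF assms(1)] assms(2) by (rule card_mono[rotated])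
  finally show ?thesis .
qed

theorem mainTheorem2:
  fixes V :: "'a set" and le :: "'a \<Rightarrow> 'a \<Rightarrow> bool" and po :: "'a \<Rightarrow> 'a \<Rightarrow> 'a \<Rightarrow> bool"
    and ver :: version
  assumes "rooted_tree V le"
    and "V \<noteq> {}"
    and "ver = Unlabelled_Planar \<longrightarrow> planar_structure V le po"
  shows "\<not> segal_map_surjective ver V le po"
proof
  assume "segal_map_surjective ver V le po"
  then obtain p where p: "p \<in> X2_rep V le"
    and "same_X1 ver le po (face0_2 p) V" "same_X1 ver le po (face2_2 p) V"
    unfolding segal_map_surjective_def using admissible_whole by blast
  then have "card (face0_2 p) = card V" "card (face2_2 p) = card V"
    by (simp_all add: same_X1_card_eq)
  moreover have "finite V"
    using assms(1) unfolding rooted_tree_def by blast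
  moreover from this have "card V > 0"
    using assms(2) by (simp add: card_gt_0_iff)
  ultimately show False
    using X2_rep_faces_card_le[OF p] by linarith
qed

end
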